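(* Let $G=(V,E)$ be a finite simple graph with at least one vertex, $k>0$, and let $\mathcal F^*$ be the set of all stars $\{(A_1,B_1),(A_2,B_2),(A_3,B_3)\}\subseteq\vec S_k$ (elements not necessarily distinct) with $G[A_1]\cup G[A_2]\cup G[A_3]=G$. Then $\mathcal F^*$ is closed under shifting (with respect to $\vec S_k$ inside the universe $\vec U$ of oriented vertex separations of $G$): whenever $\vec s_0\in\vec S_k$ is linked to some $\vec r\le\vec s_0$ in $\vec S_k$ that is not forced by $\mathcal F^*$, then $\vec s_0$ is $\mathcal F^*$-linked to $\vec r$.
   Context: An oriented vertex separation of $G$ is an ordered pair $(A,B)$ with $A\cup B=V$ and no edge between $A\setminus B$ and $B\setminus A$. They form a universe $\vec U$ with $(A,B)\le(C,D)$ iff $A\subseteq C$, $B\supseteq D$; $(A,B)^*=(B,A)$; $(A,B)\vee(C,D)=(A\cup C,B\cap D)$; $(A,B)\wedge(C,D)=(A\cap C,B\cup D)$. $\vec S_k=\{(A,B)\in\vec U:|A\cap B|<k\}$, and $S_k$ is its set of separations $s=\{\vec s,\vec s^{\,*}\}$; write $\overleftarrow s=\vec s^{\,*}$; $s$ is degenerate if $\vec s=\overleftarrow s$; $\vec r$ is trivial if some $s\in S_k$ has $\vec r<\vec s$ and $\vec r<\overleftarrow s$. A star is a nonempty set $\sigma$ with $\vec r\le\overleftarrow s$ for all distinct $\vec r,\vec s\in\sigma$. $\mathcal F$ forces $\vec r$ if $\{\overleftarrow r\}\in\mathcal F$ or $r$ is degenerate (elements not forced by $\mathcal F^*$ are nontrivial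 and nondegenerate). For nontrivial nondegenerate $\vec r$, $\vec S_{\ge\vec r}$ is the set of all orientations of separations in $S_k$ having an orientation $\ge\vec r$, and for $\vec s_0\ge\vec r$ the shifting map $f:\vec S_{\ge\vec r}\to\vec U$ is $f(\vec s)=\vec s\vee\vec s_0$, $f(\overleftarrow s)=(\vec s\vee\vec s_0)^*$ for all $\vec s\in\vec S_{\ge\vec r}\setminus\{\overleftarrow r\}$ with $\vec s\ge\vec r$. $\vec s_0$ is linked to $\vec r$ if $\vec s_0\ge\vec r$ and $\vec s\vee\vec s_0\in\vec S_k$ for all $\vec s\in\vec S_k$ with $\vec s\ge\vec r$, $\vec s\ne\overleftarrow r$; it is $\mathcal F$-linked to $\vec r$ if moreover $f(\sigma)\in\mathcal F$ for every star $\sigma\in\mathcal F$ with $\sigma\subseteq\vec S_{\ge\vec r}\setminus\{\overleftarrow r\}$ having an element $\ge\vec r$. *)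

theory Defs
  imports Main
begin

text \<open>Finite simple graph G = (V,E): E is a symmetric irreflexive relation on V.
 Oriented vertex separations are pairs (A,B) of vertex sets.\<close>

type_synonym 'a osep = "'a set \<times> 'a set"

definition is_osep :: "'a set \<Rightarrow> ('a \<times> 'a) set \<Rightarrow> 'a osep \<Rightarrow> bool" where
  "is_osep V E p \<longleftrightarrow> fst p \<union> snd p = V \<and>
     (\<forall>x \<in> fst p - snd p. \<forall>y \<in> snd p - fst p. (x, y) \<notin> E)"

definition Univ :: "'a set \<Rightarrow> ('a \<times> 'a) set \<Rightarrow> 'a osep set" where
  "Univ V E = {p. is_osep V E p}"

definition sep_le :: "'a osep \<Rightarrow> 'a osep \<Rightarrow> bool" where
  "sep_le p q \<longleftrightarrow> fst p \<subseteq> fst q \<and> snd q \<subseteq> snd p"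

definition sinv :: "'a osep \<Rightarrow> 'a osep" where
  "sinv p = (snd p, fst p)"

definition sjoin :: "'a osep \<Rightarrow> 'a osep \<Rightarrow> 'a osep" where
  "sjoin p q = (fst p \<union> fst q, snd p \<inter> snd q)"

definition smeet :: "'a osep \<Rightarrow> 'a osep \<Rightarrow> 'a osep" where
  "smeet p q = (fst p \<inter> fst q, snd p \<union> snd q)"

definition Sk :: "'a set \<Rightarrow> ('a \<times> 'a) set \<Rightarrow> nat \<Rightarrow> 'a osep set" where
  "Sk V E k = {p \<in> Univ V E. card (fst p \<inter> snd p) < k}"

definition degenerate :: "'a osep \<Rightarrow> bool" where
  "degenerate s \<longleftrightarrow> s = sinv s"

definition is_star :: "'a osep set \<Rightarrow> bool" where
  "is_star \<sigma> \<longleftrightarrow> \<sigma> \<noteq> {} \<and> (\<forall>r \<in> \<sigma>. \<forall>s \<in> \<sigma>. r \<noteq> s \<longrightarrow> sep_le r (sinv s))"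

definition induced_union_is_G ::
  "'a set \<Rightarrow> ('a \<times> 'a) set \<Rightarrow> 'a set \<Rightarrow> 'a set \<Rightarrow> 'a set \<Rightarrow> bool" where
  "induced_union_is_G V E A1 A2 A3 \<longleftrightarrow>
     (A1 \<inter> V) \<union> (A2 \<inter> V) \<union> (A3 \<inter> V) = V \<and>
     (E \<inter> (A1 \<times> A1)) \<union> (E \<inter> (A2 \<times> A2)) \<union> (E \<inter> (A3 \<times> A3)) = E"

definition Fstar :: "'a set \<Rightarrow> ('a \<times> 'a) set \<Rightarrow> nat \<Rightarrow> 'a osep set set" where
  "Fstar V E k = {\<sigma>. \<exists>a1 a2 a3. a1 \<in> Sk V E k \<and> a2 \<in> Sk V E k \<and> a3 \<in> Sk V E k \<and>
      \<sigma> = {a1, a2, a3} \<and> is_star \<sigma> \<and> induced_union_is_G V E (fst a1) (fst a2) (fst a3)}"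

definition forces :: "'a osep set set \<Rightarrow> 'a osep \<Rightarrow> bool" where
  "forces F r \<longleftrightarrow> {sinv r} \<in> F \<or> degenerate r"

definition S_ge :: "'a set \<Rightarrow> ('a \<times> 'a) set \<Rightarrow> nat \<Rightarrow> 'a osep \<Rightarrow> 'a osep set" where
  "S_ge V E k r = {s \<in> Sk V E k. sep_le r s \<or> sep_le r (sinv s)}"

text \<open>Shifting map f: f(s) = s \<or> s0 and f(s*) = (s \<or> s0)* for s \<ge> r, s \<noteq> r*.
  Written out pointwise (well-defined on S_{\<ge> r} for nondegenerate nontrivial r).\<close>
definition shift :: "'a osep \<Rightarrow> 'a osep \<Rightarrow> 'a osep \<Rightarrow> 'a osep" where
  "shift r s0 t = (if sep_le r t \<and> t \<noteq> sinv r then sjoin t s0 else sinv (sjoin (sinv t) s0))"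

definition linked :: "'a set \<Rightarrow> ('a \<times> 'a) set \<Rightarrow> nat \<Rightarrow> 'a osep \<Rightarrow> 'a osep \<Rightarrow> bool" where
  "linked V E k s0 r \<longleftrightarrow> sep_le r s0 \<and>
     (\<forall>s \<in> Sk V E k. sep_le r s \<and> s \<noteq> sinv r \<longrightarrow> sjoin s s0 \<in> Sk V E k)"

definition F_linked ::
  "'a osep set set \<Rightarrow> 'a set \<Rightarrow> ('a \<times> 'a) set \<Rightarrow> nat \<Rightarrow> 'a osep \<Rightarrow> 'a osep \<Rightarrow> bool" where
  "F_linked F V E k s0 r \<longleftrightarrow> linked V E k s0 r \<and>
     (\<forall>\<sigma> \<in> F. is_star \<sigma> \<and> \<sigma> \<subseteq> S_ge V E k r - {sinv r} \<and> (\<exists>s \<in> \<sigma>. sep_le r s)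
        \<longrightarrow> shift r s0 ` \<sigma> \<in> F)"

end

theory Submission
  imports Defs
begin

(* Let r be neither forced nor degenerate, s0 linked to r, and let
   sigma = {a1,a2,a3} be a star in F* contained in S_{>= r} - {r*} with some
   element s >= r.  Since r is not forced, r is not "small" (r <= r* fails);
   hence s is the unique element of sigma above r, and every other t in sigma
   satisfies r <= t*.  So on sigma the shifting map is the explicit map
   shift_star s s0, which joins s0 to s and to the inverses t* of the others.
   Three facts then give the result:
     (1) shift_star maps any star to a star (pure lattice computation);
     (2) the shifted elements stay in S_k, because s0 is linked to r;
     (3) the shifted parts still cover G: vertices and edges of G on the
         s0-side are covered by the shifted s, all others by the shifted parts,
         which only grew on the complementary side of the separation s0. *)

lemma sinv_sinv [simp]: "sinv (sinv p) = p"
  by (simp add: sinv_def)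

lemma sinv_Sk: "sym E \<Longrightarrow> p \<in> Sk V E k \<Longrightarrow> sinv p \<in> Sk V E k"
  by (auto simp: Sk_def Univ_def is_osep_def sinv_def Int_commute dest: symD)

lemma sep_le_refl: "sep_le p p"
  by (simp add: sep_le_def)

lemma sep_le_trans: "sep_le p q \<Longrightarrow> sep_le q u \<Longrightarrow> sep_le p u"
  by (auto simp: sep_le_def)

lemma sep_le_flip: "sep_le p q \<Longrightarrow> sep_le (sinv q) (sinv p)"
  by (auto simp: sep_le_def sinv_def)

text \<open>If \<open>r \<le> r*\<close> then the side \<open>B\<close> of \<open>r = (A,B)\<close> is all of \<open>V\<close>, so the singleton
  star \<open>{r*}\<close> covers \<open>G\<close> and lies in \<open>\<F>\<^sup>*\<close>: such an \<open>r\<close> is forced.  Contrapositively,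
  an unforced \<open>r\<close> is not small, which is what makes shifting well behaved.\<close>

lemma small_separation_forced:
  assumes "E \<subseteq> V \<times> V" and "sym E" and "r \<in> Sk V E k" and "sep_le r (sinv r)"
  shows "forces (Fstar V E k) r"
proof -
  have "snd r = V"
    using assms(3,4) by (auto simp: sep_le_def sinv_def Sk_def Univ_def is_osep_def)
  moreover have "sinv r \<in> Sk V E k"
    using sinv_Sk assms(2,3) by blast
  ultimately have "{sinv r} \<in> Fstar V E k"
    using assms(1) unfolding Fstar_def
    by (auto simp: is_star_def induced_union_is_G_def sinv_def)
  then show ?thesis
    by (simp add: forces_def)
qed

lemma star_other_elements:
  assumes star: "is_star \<sigma>" and s: "s \<in> \<sigma>" "sep_le r s"
    and not_small: "\<not> sep_le r (sinv r)"
    and t: "t \<in> \<sigma>" "t \<noteq> s"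
  shows "sep_le r (sinv t)" and "\<not> sep_le r t"
proof -
  have t_le: "sep_le t (sinv s)"
    using star s(1) t unfolding is_star_def by blast
  show "sep_le r (sinv t)"
    using sep_le_trans[OF s(2)] sep_le_flip[OF t_le] by simp
  show "\<not> sep_le r t"
  proof
    assume "sep_le r t"
    then have "sep_le r (sinv s)"
      using t_le sep_le_trans by blast
    then show False
      using not_small sep_le_trans sep_le_flip[OF s(2)] by blast
  qed
qed

definition shift_star :: "'a osep \<Rightarrow> 'a osep \<Rightarrow> 'a osep \<Rightarrow> 'a osep" where
  "shift_star s s0 t = (if t = s then sjoin s s0 else sinv (sjoin (sinv t) s0))"

lemma shift_eq_shift_star:
  assumes "is_star \<sigma>" "s \<in> \<sigma>" "sep_le r s" "s \<noteq> sinv r"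
    and "\<not> sep_le r (sinv r)" and "t \<in> \<sigma>"
  shows "shift r s0 t = shift_star s s0 t"
  using assms star_other_elements(2)[OF assms(1-3,5,6)]
  by (auto simp: shift_def shift_star_def)

lemma shift_star_is_star:
  assumes "is_star \<sigma>"
  shows "is_star (shift_star s s0 ` \<sigma>)"
  unfolding is_star_def
proof (intro conjI ballI impI)
  show "shift_star s s0 ` \<sigma> \<noteq> {}"
    using assms by (simp add: is_star_def)
  fix p q assume "p \<in> shift_star s s0 ` \<sigma>" "q \<in> shift_star s s0 ` \<sigma>" "p \<noteq> q"
  then obtain x y where xy: "x \<in> \<sigma>" "y \<in> \<sigma>" "x \<noteq> y"
    and p: "p = shift_star s s0 x" and q: "q = shift_star s s0 y"
    by blast
  have "sep_le x (sinv y)"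
    using assms xy unfolding is_star_def by blast
  then show "sep_le p (sinv q)"
    using xy(3) unfolding p q shift_star_def
    by (auto simp: sep_le_def sinv_def sjoin_def)
qed

lemma shift_star_Sk:
  assumes "sym E" and linked: "linked V E k s0 r"
    and star: "is_star \<sigma>" "\<sigma> \<subseteq> Sk V E k"
    and s: "s \<in> \<sigma>" "sep_le r s" "s \<noteq> sinv r"
    and not_small: "\<not> sep_le r (sinv r)" and t: "t \<in> \<sigma>"
  shows "shift_star s s0 t \<in> Sk V E k"
proof (cases "t = s")
  case True
  then show ?thesis
    using linked star(2) s by (auto simp: shift_star_def linked_def)
next
  case False
  have t_Sk: "t \<in> Sk V E k"
    using star(2) t by blast
  have r_le: "sep_le r (sinv t)" and r_not_le: "\<not> sep_le r t"
    using star_other_elements[OF star(1) s(1,2) not_small t False] by blast+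
  have "sinv t \<noteq> sinv r"
    using r_not_le sep_le_refl by (metis sinv_sinv)
  then have "sjoin (sinv t) s0 \<in> Sk V E k"
    using linked r_le sinv_Sk[OF assms(1) t_Sk] by (auto simp: linked_def)
  then show ?thesis
    using False sinv_Sk[OF assms(1)] by (simp add: shift_star_def)
qed

text \<open>Let \<open>G[A1] \<union> G[A2] \<union> G[A3] = G\<close> and let \<open>(S1,S2)\<close> be a separation of \<open>G\<close>.
  If each \<open>Bi\<close> contains the part of \<open>Ai\<close> in \<open>S2\<close>, and some \<open>Bi\<close> contains all of \<open>S1\<close>,
  then \<open>G[B1] \<union> G[B2] \<union> G[B3] = G\<close>: vertices and edges inside \<open>S2\<close> are covered
  as before, and every other vertex or edge lies inside \<open>S1\<close>.\<close>

lemma induced_cover_transfer: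
  assumes cover: "induced_union_is_G V E A1 A2 A3"
    and grow: "A1 \<inter> S2 \<subseteq> B1" "A2 \<inter> S2 \<subseteq> B2" "A3 \<inter> S2 \<subseteq> B3"
    and big: "S1 \<subseteq> B1 \<or> S1 \<subseteq> B2 \<or> S1 \<subseteq> B3"
    and sep: "is_osep V E (S1, S2)"
    and "sym E" "E \<subseteq> V \<times> V"
  shows "induced_union_is_G V E B1 B2 B3"
proof -
  have V_cov: "V \<subseteq> A1 \<union> A2 \<union> A3" and E_cov: "E \<subseteq> A1 \<times> A1 \<union> A2 \<times> A2 \<union> A3 \<times> A3"
    using cover by (auto simp: induced_union_is_G_def)
  have S_V: "S1 \<union> S2 = V" and no_cross: "\<forall>x \<in> S1 - S2. \<forall>y \<in> S2 - S1. (x, y) \<notin> E"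
    using sep by (auto simp: is_osep_def)
  have "V \<subseteq> B1 \<union> B2 \<union> B3"
    using V_cov S_V grow big by blast
  moreover have "(x, y) \<in> B1 \<times> B1 \<union> B2 \<times> B2 \<union> B3 \<times> B3" if xy: "(x, y) \<in> E" for x y
  proof (cases "x \<in> S2 \<and> y \<in> S2")
    case True
    then show ?thesis
      using E_cov xy grow by blast
  next
    case False
    have "(y, x) \<in> E"
      using xy \<open>sym E\<close> by (auto dest: symD)
    then have "x \<in> S1 \<and> y \<in> S1"
      using False xy no_cross S_V \<open>E \<subseteq> V \<times> V\<close> by blast
    then show ?thesis
      using big by blast
  qed
  ultimately show ?thesis
    unfolding induced_union_is_G_def by auto
qed

lemma shift_star_Fstar:
  assumes "sym E" "E \<subseteq> V \<times> V"
    and \<sigma>: "\<sigma> \<in> Fstar V E k" and s: "s \<in> \<sigma>" and s0: "s0 \<in> Univ V E"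
    and in_Sk: "\<And>t. t \<in> \<sigma> \<Longrightarrow> shift_star s s0 t \<in> Sk V E k"
  shows "shift_star s s0 ` \<sigma> \<in> Fstar V E k"
proof -
  obtain a1 a2 a3 where \<sigma>_eq: "\<sigma> = {a1, a2, a3}" and star: "is_star \<sigma>"
    and cover: "induced_union_is_G V E (fst a1) (fst a2) (fst a3)"
    using \<sigma> unfolding Fstar_def by blast
  let ?f = "shift_star s s0"
  have grow: "fst a \<inter> snd s0 \<subseteq> fst (?f a)" for a
    by (auto simp: shift_star_def sinv_def sjoin_def)
  have "fst s0 \<subseteq> fst (?f s)"
    by (auto simp: shift_star_def sjoin_def)
  then have big: "fst s0 \<subseteq> fst (?f a1) \<or> fst s0 \<subseteq> fst (?f a2) \<or> fst s0 \<subseteq> fst (?f a3)"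
    using s \<sigma>_eq by auto
  have sep: "is_osep V E (fst s0, snd s0)"
    using s0 by (simp add: Univ_def)
  have "induced_union_is_G V E (fst (?f a1)) (fst (?f a2)) (fst (?f a3))"
    using induced_cover_transfer[OF cover grow grow grow big sep assms(1,2)] .
  moreover have "?f ` \<sigma> = {?f a1, ?f a2, ?f a3}"
    using \<sigma>_eq by simp
  moreover have "?f a1 \<in> Sk V E k" "?f a2 \<in> Sk V E k" "?f a3 \<in> Sk V E k"
    using in_Sk \<sigma>_eq by auto
  ultimately show ?thesis
    using shift_star_is_star[OF star] unfolding Fstar_def by blast
qed

theorem lemma5p3:
  fixes V :: "'a set" and E :: "('a \<times> 'a) set" and k :: nat
  assumes "finite V" and "V \<noteq> {}"
    and "E \<subseteq> V \<times> V" and "sym E" and "\<forall>x. (x, x) \<notin> E"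
    and "k > 0"
  shows "\<forall>s0 \<in> Sk V E k. \<forall>r \<in> Sk V E k.
           sep_le r s0 \<and> linked V E k s0 r \<and> \<not> forces (Fstar V E k) r
           \<longrightarrow> F_linked (Fstar V E k) V E k s0 r"
proof (intro ballI impI)
  fix s0 r assume s0: "s0 \<in> Sk V E k" and r: "r \<in> Sk V E k"
    and hyp: "sep_le r s0 \<and> linked V E k s0 r \<and> \<not> forces (Fstar V E k) r"
  then have linked: "linked V E k s0 r" and not_small: "\<not> sep_le r (sinv r)"
    using small_separation_forced[OF assms(3,4) r] by blast+
  have s0_U: "s0 \<in> Univ V E"
    using s0 by (simp add: Sk_def)
  show "F_linked (Fstar V E k) V E k s0 r"
    unfolding F_linked_def
  proof (intro conjI ballI impI)
    fix \<sigma> assume \<sigma>: "\<sigma> \<in> Fstar V E k"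
      and hyp\<sigma>: "is_star \<sigma> \<and> \<sigma> \<subseteq> S_ge V E k r - {sinv r} \<and> (\<exists>s\<in>\<sigma>. sep_le r s)"
    then obtain s where s: "s \<in> \<sigma>" "sep_le r s" "s \<noteq> sinv r"
      and star: "is_star \<sigma>" "\<sigma> \<subseteq> Sk V E k"
      by (auto simp: S_ge_def)
    have "shift r s0 ` \<sigma> = shift_star s s0 ` \<sigma>"
      using shift_eq_shift_star[OF star(1) s not_small] by simp
    moreover have "shift_star s s0 ` \<sigma> \<in> Fstar V E k"
      using shift_star_Fstar[OF assms(4,3) \<sigma> s(1) s0_U]
        shift_star_Sk[OF assms(4) linked star s not_small] by blast
    ultimately show "shift r s0 ` \<sigma> \<in> Fstar V E k"
      by simp
  qed (rule linked)
qed

end
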